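(* Let $X$ be a finite-dimensional (real or complex) CL-space with an absolute norm and let $m$ be a positive integer. If $y_1,\dots,y_m$ are extreme points of $B_X$ all of whose coordinates are nonnegative real numbers, then $\frac1m\sum_{j=1}^my_j\in\tilde\rho\,\mathcal{P}({}^mX)$; that is, there is a nonzero $Q\in\mathcal{P}({}^mX)$ which strongly attains its norm at $\frac1m\sum_{j=1}^my_j$.
   Context: $X$ is $\mathbb{F}^n$ ($\mathbb{F}=\mathbb{R}$ or $\mathbb{C}$) with a norm that is absolute: $\|(a_1,\dots,a_n)\|=\|(|a_1|,\dots,|a_n|)\|$ and $\|e_j\|=1$ for the canonical basis vectors. A Banach space is a CL-space if its unit ball is the absolutely convex hull of every maximal convex subset of its unit sphere; in finite dimensions, equivalently, $|x^*(x)|=1$ for every extreme point $x^*$ of $B_{X^*}$ and every extreme point $x$ of $B_X$. $\mathcal{P}({}^mX)$ is the space of $m$-homogeneous scalar polynomials on $X$ with norm $\|Q\|=\sup_{x\in B_X}|Q(x)|$. A nonzero $Q$ strongly attains its norm at $x\in B_X$ if for every sequence $\{x_n\}\subset B_X$ with $|Q(x_n)|\to\|Q\|$ there are a scalar $\lambda$ with $|\lambda|=1$ and a subsequence of $\{x_n\}$ converging to $\lambda x$; $\tilde\rho\,\mathcal{P}({}^mX)$ is the set of all points at which some nonzero element of $\mathcal{P}({}^mX)$ strongly attains its norm. *)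

theory Defs
  imports "HOL-Analysis.Analysis"
begin

text \<open>The space X = F^n (F = real or complex) is modelled as 'a ^ 'n, equipped with an
  arbitrary norm N (a real-valued function satisfying the norm axioms).\<close>

definition is_norm_on :: "('a::real_normed_field ^ 'n::finite \<Rightarrow> real) \<Rightarrow> bool" where
  "is_norm_on N \<longleftrightarrow>
     (\<forall>x. 0 \<le> N x) \<and> (\<forall>x. N x = 0 \<longleftrightarrow> x = 0) \<and>
     (\<forall>c x. N (c *s x) = norm c * N x) \<and> (\<forall>x y. N (x + y) \<le> N x + N y)"

definition absolute_norm :: "('a::real_normed_field ^ 'n::finite \<Rightarrow> real) \<Rightarrow> bool" where
  "absolute_norm N \<longleftrightarrow> is_norm_on N \<and>
     (\<forall>x. N x = N (\<chi> i. of_real (norm (x $ i)))) \<and> (\<forall>j. N (axis j 1) = 1)"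

definition unit_ball :: "('a::real_normed_field ^ 'n::finite \<Rightarrow> real) \<Rightarrow> ('a ^ 'n) set" where
  "unit_ball N = {x. N x \<le> 1}"

text \<open>Linear functionals on F^n are represented by vectors f, acting as x \<mapsto> sum_i f_i x_i.\<close>
definition pair :: "'a::real_normed_field ^ 'n::finite \<Rightarrow> 'a ^ 'n \<Rightarrow> 'a" where
  "pair f x = (\<Sum>i\<in>UNIV. f $ i * x $ i)"

definition dual_norm :: "('a::real_normed_field ^ 'n::finite \<Rightarrow> real) \<Rightarrow> 'a ^ 'n \<Rightarrow> real" where
  "dual_norm N f = Sup ((\<lambda>x. norm (pair f x)) ` unit_ball N)"

definition dual_unit_ball :: "('a::real_normed_field ^ 'n::finite \<Rightarrow> real) \<Rightarrow> ('a ^ 'n) set" where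
  "dual_unit_ball N = {f. dual_norm N f \<le> 1}"

definition CL_space :: "('a::real_normed_field ^ 'n::finite \<Rightarrow> real) \<Rightarrow> bool" where
  "CL_space N \<longleftrightarrow> (\<forall>f x. f extreme_point_of dual_unit_ball N \<longrightarrow> x extreme_point_of unit_ball N
      \<longrightarrow> norm (pair f x) = 1)"

definition multi_indices :: "nat \<Rightarrow> ('n::finite \<Rightarrow> nat) set" where
  "multi_indices m = {\<alpha>. (\<Sum>i\<in>UNIV. \<alpha> i) = m}"

definition homog_poly :: "nat \<Rightarrow> ('a::real_normed_field ^ 'n::finite \<Rightarrow> 'a) \<Rightarrow> bool" where
  "homog_poly m Q \<longleftrightarrow> (\<exists>c :: ('n \<Rightarrow> nat) \<Rightarrow> 'a.
      Q = (\<lambda>x. \<Sum>\<alpha>\<in>multi_indices m. c \<alpha> * (\<Prod>i\<in>UNIV. (x $ i) ^ \<alpha> i)))"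

definition poly_norm :: "('a::real_normed_field ^ 'n::finite \<Rightarrow> real) \<Rightarrow> ('a ^ 'n \<Rightarrow> 'a) \<Rightarrow> real" where
  "poly_norm N Q = Sup ((\<lambda>x. norm (Q x)) ` unit_ball N)"

definition strongly_attains_at ::
  "('a::real_normed_field ^ 'n::finite \<Rightarrow> real) \<Rightarrow> ('a ^ 'n \<Rightarrow> 'a) \<Rightarrow> 'a ^ 'n \<Rightarrow> bool" where
  "strongly_attains_at N Q x \<longleftrightarrow> x \<in> unit_ball N \<and> Q \<noteq> (\<lambda>_. 0) \<and>
     (\<forall>s :: nat \<Rightarrow> 'a ^ 'n. (\<forall>k. s k \<in> unit_ball N) \<and>
        (\<lambda>k. norm (Q (s k))) \<longlonglongrightarrow> poly_norm N Q \<longrightarrow>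
        (\<exists>l::'a. norm l = 1 \<and> (\<exists>r. strict_mono r \<and> (s \<circ> r) \<longlonglongrightarrow> l *s x)))"

definition rho_tilde :: "('a::real_normed_field ^ 'n::finite \<Rightarrow> real) \<Rightarrow> nat \<Rightarrow> ('a ^ 'n) set" where
  "rho_tilde N m = {x. \<exists>Q. homog_poly m Q \<and> Q \<noteq> (\<lambda>_. 0) \<and> strongly_attains_at N Q x}"

definition thm45_claim :: "'a::real_normed_field itself \<Rightarrow> 'n::finite itself \<Rightarrow> bool" where
  "thm45_claim _ _ \<longleftrightarrow>
    (\<forall>(N :: 'a ^ 'n \<Rightarrow> real) (m::nat) (y :: nat \<Rightarrow> 'a ^ 'n).
       absolute_norm N \<longrightarrow> CL_space N \<longrightarrow> 0 < m \<longrightarrow>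
       (\<forall>j<m. y j extreme_point_of unit_ball N \<and> (\<forall>i. \<exists>r::real. 0 \<le> r \<and> y j $ i = of_real r)) \<longrightarrow>
       (of_real (1 / real m) :: 'a) *s (\<Sum>j<m. y j) \<in> rho_tilde N m)"

end

theory Submission
  imports Defs
begin

text \<open>
  Because N is absolute, unimodular diagonal maps preserve both unit balls and their extreme
  points.  Combined with the CL property this gives, for every coordinate i, a nonnegative
  extreme functional F_i with F_i(e_i) = 1 such that F_i pairs with every y_j through exactly
  one coordinate pivot(i,j), with F_i(k) y_j(k) = 1 there.  Let x0 = (1/m) sum_j y_j, let
  M_i(x) = prod_j x_{pivot(i,j)}, and let g be the average of the F_i.  The polynomial
    Q = sum_i M_i / M_i(x0) + g^m
  is m-homogeneous, and Q(x0) = n + 1.  An AM-GM argument bounds each |M_i| by M_i(x0) on the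
  unit ball, and |g| \<le> 1 there, so ||Q|| = n + 1.  At any norming point z all these bounds are
  equalities, which forces |z_k| = x0_k for all k and then z = l x0 with |l| = 1 by the equality
  case of Cauchy-Schwarz.  Compactness of the unit ball turns this into strong attainment.
\<close>

lemma zero_one_sum_one_point_mass:
  fixes c :: "'n::finite \<Rightarrow> real"
  assumes sum: "sum c UNIV = 1" and zero_one: "\<And>k. c k = 0 \<or> c k = 1"
  shows "\<exists>p. \<forall>k. c k = (if k = p then 1 else 0)"
proof -
  have nonneg: "0 \<le> c k" for k using zero_one[of k] by auto
  obtain p where p: "c p = 1"
    using sum zero_one by (metis sum.neutral zero_neq_one)
  have "c k = 0" if "k \<noteq> p" for k
  proof (rule ccontr)
    assume "c k \<noteq> 0"
    then have "sum c {k, p} = 2" using p that zero_one[of k] by simp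
    moreover have "sum c {k, p} \<le> sum c UNIV"
      by (rule sum_mono2) (auto simp: nonneg)
    ultimately show False using sum by simp
  qed
  then show ?thesis using p by metis
qed

lemma sum_le_sum_termwise_eq:
  fixes f h :: "'i \<Rightarrow> real"
  assumes "finite A" and le: "\<And>x. x \<in> A \<Longrightarrow> f x \<le> h x" and ge: "sum h A \<le> sum f A" and x: "x \<in> A"
  shows "f x = h x"
proof (rule ccontr)
  assume "f x \<noteq> h x"
  then have "\<exists>a\<in>A. f a < h a" using x order_le_neq_trans[OF le[OF x]] by blast
  then have "sum f A < sum h A"
    using assms(1) le by (intro sum_strict_mono_ex1) auto
  then show False using ge by simp
qed

definition diag_mult :: "'a::real_normed_field^'n::finite \<Rightarrow> 'a^'n \<Rightarrow> 'a^'n" where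
  "diag_mult d x = (\<chi> i. d $ i * x $ i)"

lemma diag_mult_nth [simp]: "diag_mult d x $ i = d $ i * x $ i"
  by (simp add: diag_mult_def)

lemma linear_diag_mult: "linear (diag_mult d)"
  by (rule linearI) (simp_all add: vec_eq_iff algebra_simps mult_scaleR_right)

definition unimodular :: "'a::real_normed_field^'n::finite \<Rightarrow> bool" where
  "unimodular d \<longleftrightarrow> (\<forall>i. norm (d $ i) = 1)"

lemma unimodular_inverse:
  assumes "unimodular d"
  shows "unimodular (\<chi> i. inverse (d $ i))" and "diag_mult d (diag_mult (\<chi> i. inverse (d $ i)) x) = x"
    and "diag_mult (\<chi> i. inverse (d $ i)) (diag_mult d x) = x"
proof -
  have "d $ i \<noteq> 0" for i using assms unfolding unimodular_def by (metis norm_zero zero_neq_one)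
  then show "diag_mult d (diag_mult (\<chi> i. inverse (d $ i)) x) = x"
    and "diag_mult (\<chi> i. inverse (d $ i)) (diag_mult d x) = x"
    by (simp_all add: vec_eq_iff mult.assoc[symmetric])
  show "unimodular (\<chi> i. inverse (d $ i))"
    using assms by (simp add: unimodular_def norm_inverse)
qed

lemma extreme_point_diag_mult:
  assumes d: "unimodular d"
    and inv: "\<And>e x. unimodular e \<Longrightarrow> x \<in> S \<Longrightarrow> diag_mult e x \<in> S"
    and y: "y extreme_point_of S"
  shows "diag_mult d y extreme_point_of S"
proof -
  have inj: "inj (diag_mult d)" by (metis injI unimodular_inverse(3)[OF d])
  have "diag_mult d ` S = S"
  proof
    show "diag_mult d ` S \<subseteq> S" using inv[OF d] by blast
    show "S \<subseteq> diag_mult d ` S"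
      using inv[OF unimodular_inverse(1)[OF d]] unimodular_inverse(2)[OF d] by (metis image_eqI subsetI)
  qed
  moreover have "{diag_mult d y} face_of diag_mult d ` S"
    using y face_of_linear_image[OF linear_diag_mult inj, of "{y}" S] by (simp add: face_of_singleton)
  ultimately show ?thesis by (simp add: face_of_singleton)
qed

lemma pair_diag_mult: "pair (diag_mult d f) x = pair f (diag_mult d x)"
  by (simp add: pair_def algebra_simps)

definition real_vec :: "('n::finite \<Rightarrow> real) \<Rightarrow> 'a::real_normed_field^'n" where
  "real_vec r = (\<chi> k. of_real (r k))"

lemma real_vec_nth [simp]: "real_vec r $ k = of_real (r k)"
  by (simp add: real_vec_def)

lemma pair_real_vec:
  "pair (real_vec a) (real_vec b :: 'a::real_normed_field^'n::finite) = of_real (\<Sum>k\<in>UNIV. a k * b k)"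
  by (simp add: pair_def)

lemma unimodular_to_moduli:
  "\<exists>d. unimodular d \<and> diag_mult d f = (real_vec (\<lambda>k. norm (f $ k)) :: 'a::real_normed_field^'n::finite)"
proof -
  define d :: "'a^'n" where "d = (\<chi> k. if f $ k = 0 then 1 else of_real (norm (f $ k)) / f $ k)"
  have "unimodular d" by (simp add: unimodular_def d_def norm_divide)
  moreover have "diag_mult d f = real_vec (\<lambda>k. norm (f $ k))" by (simp add: vec_eq_iff d_def)
  ultimately show ?thesis by blast
qed

lemma pair_axis_right: "pair f (axis k 1) = f $ k"
  by (simp add: pair_def axis_def if_distrib cong: if_cong)

lemma pair_axis_left: "pair (axis k 1) x = x $ k"
proof -
  have "(\<Sum>i\<in>UNIV. axis k 1 $ i * x $ i) = (\<Sum>i\<in>UNIV. if i = k then x $ i else 0)"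
    by (rule sum.cong) (auto simp: axis_def)
  then show ?thesis by (simp add: pair_def)
qed

lemma pair_add_left: "pair (f + g) x = pair f x + pair g x"
  by (simp add: pair_def sum.distrib algebra_simps)

lemma pair_scaleR_left: "pair (u *\<^sub>R f) x = u *\<^sub>R pair f x"
  by (simp add: pair_def scaleR_sum_right)

subsection \<open>Geometry of an absolute norm\<close>

text \<open>
  The scalar field is required to be a Euclidean space as well, so that compactness and the
  Cauchy-Schwarz inequality are available on it; both real and complex qualify.
\<close>
locale absolute_norm_space =
  fixes N :: "'a::{real_normed_field,euclidean_space} ^ 'n::finite \<Rightarrow> real"
  assumes absolute: "absolute_norm N"
begin

lemma N_add: "N (x + y) \<le> N x + N y"
  and N_smult: "N (c *s x) = norm c * N x"
  and N_moduli: "N x = N (\<chi> i. of_real (norm (x $ i)))"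
  and N_axis: "N (axis j 1) = 1"
  using absolute by (auto simp: absolute_norm_def is_norm_on_def)

lemma N_zero [simp]: "N 0 = 0"
  using N_smult[of 0 0] by simp

lemma N_sum: "N (sum f A) \<le> (\<Sum>a\<in>A. N (f a))"
proof (induction A rule: infinite_finite_induct)
  case (insert a A)
  then show ?case by (auto intro: order_trans[OF N_add])
qed simp_all

lemma N_cong: "(\<And>i. norm (x $ i) = norm (y $ i)) \<Longrightarrow> N x = N y"
  by (subst N_moduli, subst (2) N_moduli) simp

text \<open>Coordinates are dominated by the norm (reflect all coordinates but one).\<close>
lemma coord_le_N: "norm (x $ k) \<le> N x"
proof -
  define x' where "x' = (\<chi> i. (if i = k then 1 else -1) * x $ i)"
  have "N x' = N x" by (rule N_cong) (simp add: x'_def norm_mult)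
  have "x + x' = (2 * x $ k) *s axis k 1"
    by (simp add: x'_def vec_eq_iff axis_def)
  then have "N (x + x') = 2 * norm (x $ k)" by (simp add: N_smult N_axis norm_mult)
  moreover have "N (x + x') \<le> 2 * N x" using N_add[of x x'] \<open>N x' = N x\<close> by simp
  ultimately show ?thesis by simp
qed

text \<open>N is equivalent to the Euclidean norm, which yields continuity and boundedness.\<close>
lemma N_le_norm: "N x \<le> real CARD('n) * norm x"
proof -
  have "x = (\<Sum>i\<in>UNIV. (x $ i) *s axis i 1)"
    by (simp add: vec_eq_iff sum_component axis_def if_distrib cong: if_cong)
  then have "N x = N (\<Sum>i\<in>UNIV. (x $ i) *s axis i 1)" by simp
  also have "\<dots> \<le> (\<Sum>i\<in>UNIV. N ((x $ i) *s axis i 1))" by (rule N_sum)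
  also have "\<dots> = (\<Sum>i\<in>UNIV. norm (x $ i))" by (simp add: N_smult N_axis)
  also have "\<dots> \<le> (\<Sum>i\<in>(UNIV::'n set). norm x)"
    by (rule sum_mono) (rule Finite_Cartesian_Product.norm_nth_le)
  finally show ?thesis by simp
qed

lemma norm_le_N: "norm x \<le> real CARD('n) * N x"
proof -
  have "norm x \<le> (\<Sum>i\<in>UNIV. norm (x $ i))"
    unfolding norm_vec_def by (rule L2_set_le_sum) simp
  also have "\<dots> \<le> (\<Sum>i\<in>(UNIV::'n set). N x)" by (intro sum_mono coord_le_N)
  finally show ?thesis by simp
qed

lemma continuous_N: "continuous_on UNIV N"
proof (rule lipschitz_on_continuous_on, rule lipschitz_onI)
  fix x y
  have "N x \<le> N y + N (x - y)" "N y \<le> N x + N (x - y)"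
    using N_add[of y "x - y"] N_add[of x "y - x"] N_smult[of "-1" "x - y"] by simp_all
  then have "\<bar>N x - N y\<bar> \<le> N (x - y)" by linarith
  also have "\<dots> \<le> real CARD('n) * norm (x - y)" by (rule N_le_norm)
  finally show "dist (N x) (N y) \<le> real CARD('n) * dist x y" by (simp add: dist_norm dist_real_def)
qed simp

lemma compact_unit_ball: "compact (unit_ball N)"
proof -
  have "closed (unit_ball N)"
    unfolding unit_ball_def by (rule closed_Collect_le[OF continuous_N]) simp
  moreover have "unit_ball N \<subseteq> cball 0 (real CARD('n))"
    using norm_le_N by (force simp: unit_ball_def intro: order_trans mult_left_le)
  ultimately show ?thesis using compact_eq_bounded_closed bounded_cball bounded_subset by blast
qed

lemma coord_le_one: "x \<in> unit_ball N \<Longrightarrow> norm (x $ k) \<le> 1"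
  using coord_le_N[of x k] by (simp add: unit_ball_def)

lemma axis_in_unit_ball: "axis k 1 \<in> unit_ball N"
  by (simp add: unit_ball_def N_axis)

lemma unit_ball_diag_mult: "unimodular d \<Longrightarrow> x \<in> unit_ball N \<Longrightarrow> diag_mult d x \<in> unit_ball N"
  unfolding unit_ball_def unimodular_def by (simp add: N_cong[of "diag_mult d x" x] norm_mult)

lemma moduli_in_unit_ball: "x \<in> unit_ball N \<Longrightarrow> real_vec (\<lambda>k. norm (x $ k)) \<in> unit_ball N"
  using N_cong[of "real_vec (\<lambda>k. norm (x $ k))" x] by (simp add: unit_ball_def)

lemma dual_unit_ball_iff: "f \<in> dual_unit_ball N \<longleftrightarrow> (\<forall>x\<in>unit_ball N. norm (pair f x) \<le> 1)"
proof -
  have "norm (pair f x) \<le> (\<Sum>i\<in>UNIV. norm (f $ i))" if "x \<in> unit_ball N" for f x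
  proof -
    have "norm (pair f x) \<le> (\<Sum>i\<in>UNIV. norm (f $ i * x $ i))"
      unfolding pair_def by (rule norm_sum)
    also have "\<dots> \<le> (\<Sum>i\<in>UNIV. norm (f $ i))"
      using coord_le_one[OF that] by (intro sum_mono) (simp add: norm_mult mult_left_le)
    finally show ?thesis .
  qed
  then have "bdd_above ((\<lambda>x. norm (pair f x)) ` unit_ball N)" for f by (intro bdd_aboveI2) auto
  moreover have "unit_ball N \<noteq> {}" using axis_in_unit_ball by blast
  ultimately show ?thesis
    unfolding dual_unit_ball_def dual_norm_def by (subst cSup_le_iff) auto
qed

lemma dual_pair_le_one: "f \<in> dual_unit_ball N \<Longrightarrow> x \<in> unit_ball N \<Longrightarrow> norm (pair f x) \<le> 1"
  using dual_unit_ball_iff by blast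

lemma axis_in_dual_unit_ball: "axis k 1 \<in> dual_unit_ball N"
  unfolding dual_unit_ball_iff pair_axis_left using coord_le_one by blast

lemma dual_unit_ball_diag_mult:
  "unimodular d \<Longrightarrow> f \<in> dual_unit_ball N \<Longrightarrow> diag_mult d f \<in> dual_unit_ball N"
  unfolding dual_unit_ball_iff pair_diag_mult using unit_ball_diag_mult by blast

lemma convex_dual_unit_ball: "convex (dual_unit_ball N)"
  unfolding convex_def
proof (clarify)
  fix f g :: "'a^'n" and u v :: real
  assume f: "f \<in> dual_unit_ball N" and g: "g \<in> dual_unit_ball N" and uv: "0 \<le> u" "0 \<le> v" "u + v = 1"
  show "u *\<^sub>R f + v *\<^sub>R g \<in> dual_unit_ball N"
    unfolding dual_unit_ball_iff
  proof
    fix x assume x: "x \<in> unit_ball N"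
    have "norm (pair (u *\<^sub>R f + v *\<^sub>R g) x) \<le> u * norm (pair f x) + v * norm (pair g x)"
      using uv by (simp add: pair_add_left pair_scaleR_left norm_triangle_le)
    also have "\<dots> \<le> u * 1 + v * 1"
      using dual_pair_le_one[OF f x] dual_pair_le_one[OF g x] uv by (intro add_mono mult_left_mono) auto
    finally show "norm (pair (u *\<^sub>R f + v *\<^sub>R g) x) \<le> 1" using uv by simp
  qed
qed

lemma compact_dual_unit_ball: "compact (dual_unit_ball N)"
proof -
  have "dual_unit_ball N = (\<Inter>x\<in>unit_ball N. {f. norm (pair f x) \<le> 1})"
    using dual_unit_ball_iff by auto
  moreover have "closed {f. norm (pair f x) \<le> 1}" for x
    unfolding pair_def by (intro closed_Collect_le continuous_intros)
  ultimately have "closed (dual_unit_ball N)" by auto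
  moreover have "dual_unit_ball N \<subseteq> cball 0 (real CARD('n))"
  proof
    fix f assume f: "f \<in> dual_unit_ball N"
    have "norm f \<le> (\<Sum>i\<in>UNIV. norm (f $ i))"
      unfolding norm_vec_def by (rule L2_set_le_sum) simp
    also have "\<dots> \<le> (\<Sum>i\<in>(UNIV::'n set). 1)"
      using dual_pair_le_one[OF f axis_in_unit_ball] by (intro sum_mono) (simp add: pair_axis_right)
    finally show "f \<in> cball 0 (real CARD('n))" by (simp add: dist_norm)
  qed
  ultimately show ?thesis using compact_eq_bounded_closed bounded_cball bounded_subset by blast
qed

lemma nonneg_dual_moduli_le_one:
  assumes f: "real_vec F \<in> dual_unit_ball N" and F: "\<And>k. 0 \<le> F k" and x: "x \<in> unit_ball N"
  shows "(\<Sum>k\<in>UNIV. F k * norm (x $ k)) \<le> 1"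
proof -
  have "norm (of_real (\<Sum>k\<in>UNIV. F k * norm (x $ k)) :: 'a) \<le> 1"
    using dual_pair_le_one[OF f moduli_in_unit_ball[OF x]] by (simp only: pair_real_vec)
  moreover have "0 \<le> (\<Sum>k\<in>UNIV. F k * norm (x $ k))" by (intro sum_nonneg) (simp add: F)
  ultimately show ?thesis by (simp only: norm_of_real abs_of_nonneg)
qed

subsection \<open>Consequences of the CL property\<close>

lemma CL_pairing_eq_one:
  assumes CL: "CL_space N" and f: "real_vec F extreme_point_of dual_unit_ball N"
    and y: "real_vec Y extreme_point_of unit_ball N" and F: "\<And>k. F k \<ge> 0" and Y: "\<And>k. Y k \<ge> 0"
  shows "(\<Sum>k\<in>UNIV. F k * Y k) = 1"
proof -
  have "norm (pair (real_vec F) (real_vec Y :: 'a^'n)) = 1"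
    using CL f y unfolding CL_space_def by blast
  then have "norm (of_real (\<Sum>k\<in>UNIV. F k * Y k) :: 'a) = 1" by (simp only: pair_real_vec)
  moreover have "(\<Sum>k\<in>UNIV. F k * Y k) \<ge> 0" using F Y by (intro sum_nonneg) simp
  ultimately show ?thesis by (simp only: norm_of_real abs_of_nonneg)
qed

text \<open>
  Reflecting one coordinate of y keeps it extreme, so the CL condition also gives
  |1 - 2 F_k Y_k| = 1: every single term of the pairing is 0 or 1.
\<close>
lemma CL_pairing_term_zero_one:
  assumes CL: "CL_space N" and f: "real_vec F extreme_point_of dual_unit_ball N"
    and y: "real_vec Y extreme_point_of unit_ball N" and F: "\<And>k. F k \<ge> 0" and Y: "\<And>k. Y k \<ge> 0"
  shows "F k * Y k = 0 \<or> F k * Y k = 1"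
proof -
  define d :: "'a^'n" where "d = (\<chi> i. if i = k then -1 else 1)"
  define Y' where "Y' i = (if i = k then - Y i else Y i)" for i
  have "diag_mult d (real_vec Y) = real_vec Y'"
    by (simp add: vec_eq_iff d_def Y'_def)
  moreover have "unimodular d" by (simp add: unimodular_def d_def)
  ultimately have "real_vec Y' extreme_point_of unit_ball N"
    using extreme_point_diag_mult[OF _ unit_ball_diag_mult y] by metis
  then have "norm (pair (real_vec F) (real_vec Y' :: 'a^'n)) = 1"
    using CL f unfolding CL_space_def by blast
  then have "norm (of_real (\<Sum>i\<in>UNIV. F i * Y' i) :: 'a) = 1" by (simp only: pair_real_vec)
  moreover have "(\<Sum>i\<in>UNIV. F i * Y' i) = (\<Sum>i\<in>UNIV. F i * Y i) - 2 * (F k * Y k)"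
  proof -
    have "(\<Sum>i\<in>UNIV. F i * Y' i) = (\<Sum>i\<in>UNIV. F i * Y i - (if i = k then 2 * (F i * Y i) else 0))"
      by (rule sum.cong) (auto simp: Y'_def)
    then show ?thesis by (simp add: sum_subtractf)
  qed
  ultimately have "\<bar>1 - 2 * (F k * Y k)\<bar> = 1"
    using CL_pairing_eq_one[OF CL f y F Y] by (simp only: norm_of_real)
  then show ?thesis by linarith
qed

lemma CL_pairing_point_mass:
  assumes CL: "CL_space N" and f: "real_vec F extreme_point_of dual_unit_ball N"
    and y: "real_vec Y extreme_point_of unit_ball N" and F: "\<And>k. F k \<ge> 0" and Y: "\<And>k. Y k \<ge> 0"
  shows "\<exists>p. \<forall>k. F k * Y k = (if k = p then 1 else 0)"
  using zero_one_sum_one_point_mass[of "\<lambda>k. F k * Y k"]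
    CL_pairing_eq_one[OF assms] CL_pairing_term_zero_one[OF assms] by blast

text \<open>
  For every coordinate k there is a nonnegative extreme functional with value 1 at e_k:
  by Krein-Milman some extreme functional has real part at least 1 at e_k; it then equals 1
  there, and replacing it by its moduli keeps it extreme.
\<close>
lemma nonneg_extreme_functional_at:
  "\<exists>F. real_vec F extreme_point_of dual_unit_ball N \<and> (\<forall>i. F i \<ge> 0) \<and> F k = 1"
proof -
  have hull: "dual_unit_ball N = convex hull {f. f extreme_point_of dual_unit_ball N}"
    by (rule Krein_Milman_Minkowski[OF compact_dual_unit_ball convex_dual_unit_ball])
  have "\<exists>f. f extreme_point_of dual_unit_ball N \<and> inner (axis k 1) f \<ge> 1"
  proof (rule ccontr)
    assume "\<not> ?thesis"
    then have "convex hull {f. f extreme_point_of dual_unit_ball N} \<subseteq> {f. inner (axis k (1::'a)) f < 1}"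
      by (intro hull_minimal convex_halfspace_lt) auto
    then have "inner (axis k (1::'a)) (axis k 1) < 1" using axis_in_dual_unit_ball hull by auto
    moreover have "inner (1::'a) 1 = 1" by (metis norm_one power2_norm_eq_inner power_one)
    ultimately show False by (simp add: inner_axis_axis)
  qed
  then obtain f where f: "f extreme_point_of dual_unit_ball N" and ge1: "inner (1::'a) (f $ k) \<ge> 1"
    by (auto simp: inner_axis')
  have "f \<in> dual_unit_ball N" using f by (simp add: extreme_point_of_def)
  then have "norm (f $ k) \<le> 1"
    using dual_pair_le_one[OF _ axis_in_unit_ball] by (metis pair_axis_right)
  then have nk: "norm (f $ k) = 1" and "inner (1::'a) (f $ k) = norm (1::'a) * norm (f $ k)"
    using norm_cauchy_schwarz[of 1 "f $ k"] ge1 by auto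
  then have fk: "f $ k = 1" using norm_cauchy_schwarz_eq[of 1 "f $ k"] by simp
  obtain d where d: "unimodular d" "diag_mult d f = real_vec (\<lambda>i. norm (f $ i))"
    using unimodular_to_moduli by blast
  have "real_vec (\<lambda>i. norm (f $ i)) extreme_point_of dual_unit_ball N"
    using extreme_point_diag_mult[OF d(1) dual_unit_ball_diag_mult f] d(2) by simp
  then show ?thesis using fk by (intro exI[of _ "\<lambda>i. norm (f $ i)"]) auto
qed

end

subsection \<open>Homogeneous polynomials\<close>

definition monomial :: "('n::finite \<Rightarrow> nat) \<Rightarrow> 'a::real_normed_field ^ 'n \<Rightarrow> 'a" where
  "monomial \<alpha> x = (\<Prod>i\<in>UNIV. (x $ i) ^ \<alpha> i)"

lemma homog_poly_monomial:
  "homog_poly m Q \<longleftrightarrow> (\<exists>c. Q = (\<lambda>x. \<Sum>\<alpha>\<in>multi_indices m. c \<alpha> * monomial \<alpha> x))"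
  unfolding homog_poly_def monomial_def ..

lemma finite_multi_indices: "finite (multi_indices m :: ('n::finite \<Rightarrow> nat) set)"
proof (rule finite_subset)
  show "multi_indices m \<subseteq> PiE (UNIV::'n set) (\<lambda>_. {..m})"
  proof
    fix \<alpha> :: "'n \<Rightarrow> nat" assume "\<alpha> \<in> multi_indices m"
    then have "\<alpha> i \<le> m" for i
      unfolding multi_indices_def using member_le_sum[of i UNIV \<alpha>] by auto
    then show "\<alpha> \<in> PiE UNIV (\<lambda>_. {..m})" by (auto simp: PiE_def extensional_def)
  qed
qed (rule finite_PiE, auto)

lemma homog_poly_mult:
  fixes P R :: "'a::real_normed_field^'n::finite \<Rightarrow> 'a"
  assumes "homog_poly a P" "homog_poly b R"
  shows "homog_poly (a + b) (\<lambda>x. P x * R x)"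
proof -
  obtain c where P: "P = (\<lambda>x. \<Sum>\<alpha>\<in>multi_indices a. c \<alpha> * monomial \<alpha> x)"
    using assms(1) homog_poly_monomial by blast
  obtain d where R: "R = (\<lambda>x. \<Sum>\<alpha>\<in>multi_indices b. d \<alpha> * monomial \<alpha> x)"
    using assms(2) homog_poly_monomial by blast
  define S where "S = (multi_indices a :: ('n \<Rightarrow> nat) set) \<times> (multi_indices b :: ('n \<Rightarrow> nat) set)"
  define plus where "plus = (\<lambda>p::('n \<Rightarrow> nat) \<times> ('n \<Rightarrow> nat). (\<lambda>i. fst p i + snd p i))"
  define e where "e \<gamma> = (\<Sum>p\<in>{p\<in>S. plus p = \<gamma>}. c (fst p) * d (snd p))" for \<gamma>
  have finS: "finite S" unfolding S_def using finite_multi_indices by blast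
  have img: "plus ` S \<subseteq> multi_indices (a + b)"
    by (auto simp: S_def plus_def multi_indices_def sum.distrib)
  have monomial_plus: "monomial (plus p) x = monomial (fst p) x * monomial (snd p) x" for p x
    unfolding monomial_def plus_def by (simp add: power_add prod.distrib)
  have "P x * R x = (\<Sum>\<gamma>\<in>multi_indices (a + b). e \<gamma> * monomial \<gamma> x)" for x
  proof -
    have "P x * R x = (\<Sum>p\<in>S. c (fst p) * d (snd p) * monomial (plus p) x)"
      unfolding P R S_def by (simp add: sum_product sum.cartesian_product monomial_plus algebra_simps)
        (rule sum.cong[OF refl], auto)
    also have "\<dots> = (\<Sum>\<gamma>\<in>multi_indices (a + b). \<Sum>p\<in>{p\<in>S. plus p = \<gamma>}. c (fst p) * d (snd p) * monomial (plus p) x)"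
      by (rule sum.group[symmetric, OF finS finite_multi_indices img])
    also have "\<dots> = (\<Sum>\<gamma>\<in>multi_indices (a + b). e \<gamma> * monomial \<gamma> x)"
      unfolding e_def sum_distrib_right by (intro sum.cong refl) auto
    finally show ?thesis .
  qed
  then show ?thesis unfolding homog_poly_monomial by (intro exI[of _ e]) (rule ext)
qed

lemma homog_poly_add:
  assumes "homog_poly m P" "homog_poly m R"
  shows "homog_poly m (\<lambda>x. P x + R x)"
proof -
  obtain c where P: "P = (\<lambda>x. \<Sum>\<alpha>\<in>multi_indices m. c \<alpha> * monomial \<alpha> x)"
    using assms(1) homog_poly_monomial by blast
  obtain d where R: "R = (\<lambda>x. \<Sum>\<alpha>\<in>multi_indices m. d \<alpha> * monomial \<alpha> x)"
    using assms(2) homog_poly_monomial by blast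
  from P R have "(\<lambda>x. P x + R x) = (\<lambda>x. \<Sum>\<alpha>\<in>multi_indices m. (c \<alpha> + d \<alpha>) * monomial \<alpha> x)"
    by (simp add: sum.distrib algebra_simps)
  then show ?thesis unfolding homog_poly_monomial by (rule exI[of _ "\<lambda>\<alpha>. c \<alpha> + d \<alpha>"])
qed

lemma homog_poly_cmult:
  assumes "homog_poly m P"
  shows "homog_poly m (\<lambda>x. k * P x)"
proof -
  obtain c where "P = (\<lambda>x. \<Sum>\<alpha>\<in>multi_indices m. c \<alpha> * monomial \<alpha> x)"
    using assms homog_poly_monomial by blast
  then have "(\<lambda>x. k * P x) = (\<lambda>x. \<Sum>\<alpha>\<in>multi_indices m. (k * c \<alpha>) * monomial \<alpha> x)"
    by (simp add: sum_distrib_left algebra_simps)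
  then show ?thesis unfolding homog_poly_monomial by (rule exI[of _ "\<lambda>\<alpha>. k * c \<alpha>"])
qed

lemma homog_poly_sum:
  assumes "\<And>i. i \<in> I \<Longrightarrow> homog_poly m (P i)"
  shows "homog_poly m (\<lambda>x. \<Sum>i\<in>I. P i x)"
  using assms
proof (induction I rule: infinite_finite_induct)
  case (insert a A)
  then show ?case by (simp add: homog_poly_add)
qed (simp_all add: homog_poly_monomial exI[of _ "\<lambda>_. 0"])

lemma homog_poly_one: "homog_poly 0 (\<lambda>x. 1)"
proof -
  have zero: "multi_indices 0 = {(\<lambda>_. 0) :: 'n::finite \<Rightarrow> nat}"
    by (auto simp: multi_indices_def)
  show ?thesis unfolding homog_poly_monomial zero
    by (intro exI[of _ "\<lambda>_. 1"]) (simp add: monomial_def)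
qed

definition unit_index :: "'n \<Rightarrow> 'n \<Rightarrow> nat" where
  "unit_index k = (\<lambda>i. if i = k then 1 else 0)"

lemma multi_indices_one: "multi_indices 1 = range (unit_index :: 'n::finite \<Rightarrow> _)"
proof
  show "range unit_index \<subseteq> (multi_indices 1 :: ('n \<Rightarrow> nat) set)"
    by (auto simp: multi_indices_def unit_index_def)
  show "multi_indices 1 \<subseteq> range (unit_index :: 'n \<Rightarrow> _)"
  proof
    fix \<alpha> :: "'n \<Rightarrow> nat" assume "\<alpha> \<in> multi_indices 1"
    then have sum: "sum \<alpha> UNIV = 1" by (simp add: multi_indices_def)
    then obtain k where k: "\<alpha> k \<noteq> 0" by (metis sum.neutral zero_neq_one)
    have "\<alpha> k + sum \<alpha> (UNIV - {k}) = 1" using sum by (metis sum.remove finite UNIV_I)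
    then have rest: "sum \<alpha> (UNIV - {k}) = 0" and one: "\<alpha> k = 1" using k by linarith+
    from rest have "\<forall>i\<in>UNIV - {k}. \<alpha> i = 0" by simp
    then have "\<alpha> = unit_index k" using one by (auto simp: unit_index_def fun_eq_iff)
    then show "\<alpha> \<in> range unit_index" by simp
  qed
qed

lemma homog_poly_linear: "homog_poly 1 (\<lambda>x. pair w x)"
proof -
  have inj: "inj unit_index" by (auto simp: inj_def unit_index_def fun_eq_iff split: if_splits)
  have monomial_unit: "monomial (unit_index k) x = x $ k" for k and x :: "'a^'b"
    unfolding monomial_def unit_index_def by (simp add: if_distrib prod.If_cases)
  define c where "c \<alpha> = (if \<alpha> \<in> range unit_index then w $ (inv unit_index \<alpha>) else 0)" for \<alpha>
  have "pair w x = (\<Sum>\<alpha>\<in>multi_indices 1. c \<alpha> * monomial \<alpha> x)" for x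
    unfolding multi_indices_one pair_def
    by (subst sum.reindex[OF inj]) (simp add: c_def monomial_unit inv_f_f[OF inj])
  then show ?thesis unfolding homog_poly_monomial by (intro exI[of _ c]) (rule ext)
qed

lemma homog_poly_prod_linear: "homog_poly m (\<lambda>x. \<Prod>j<m. pair (w j) x)"
proof (induction m)
  case 0
  then show ?case by (simp add: homog_poly_one)
next
  case (Suc m)
  then have "homog_poly (m + 1) (\<lambda>x. (\<Prod>j<m. pair (w j) x) * pair (w m) x)"
    by (intro homog_poly_mult homog_poly_linear)
  then show ?case by simp
qed

subsection \<open>AM-GM with its equality case\<close>

lemma prod_le_one_of_mean_le_one:
  fixes t :: "'j \<Rightarrow> real"
  assumes fin: "finite J" and nonneg: "\<And>j. j \<in> J \<Longrightarrow> 0 \<le> t j" and mean: "sum t J \<le> real (card J)"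
  shows "prod t J \<le> 1" and "prod t J = 1 \<Longrightarrow> j \<in> J \<Longrightarrow> t j = 1"
proof -
  have "prod t J \<le> 1 \<and> (prod t J = 1 \<longrightarrow> (\<forall>j\<in>J. t j = 1))"
  proof (cases "\<exists>j\<in>J. t j = 0")
    case True
    then show ?thesis using fin by (simp add: prod_zero)
  next
    case False
    then have pos: "\<And>j. j \<in> J \<Longrightarrow> 0 < t j" using nonneg by force
    define gap where "gap j = t j - 1 - ln (t j)" for j
    have gap_nonneg: "0 \<le> gap j" if "j \<in> J" for j
      using ln_le_minus_one[OF pos[OF that]] by (simp add: gap_def)
    have prod_exp: "prod t J = exp (\<Sum>j\<in>J. ln (t j))"
      using fin pos by (simp add: exp_sum)
    have split: "(\<Sum>j\<in>J. ln (t j)) = (sum t J - real (card J)) - sum gap J"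
      by (simp add: gap_def sum_subtractf)
    have gap_sum: "0 \<le> sum gap J" using gap_nonneg by (simp add: sum_nonneg)
    have "(\<Sum>j\<in>J. ln (t j)) \<le> 0"
      using split mean gap_sum by linarith
    moreover have "t j = 1" if "prod t J = 1" "j \<in> J" for j
    proof -
      have "(\<Sum>j\<in>J. ln (t j)) = 0" using that(1) prod_exp by simp
      then have "sum gap J = 0" using split mean gap_sum by linarith
      then have "gap j = 0" using sum_nonneg_eq_0_iff[OF fin] gap_nonneg that(2) by blast
      then show "t j = 1" using ln_eq_minus_one[OF pos[OF that(2)]] by (simp add: gap_def)
    qed
    ultimately show ?thesis using prod_exp by simp
  qed
  then show "prod t J \<le> 1" and "prod t J = 1 \<Longrightarrow> j \<in> J \<Longrightarrow> t j = 1" by blast+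
qed

subsection \<open>The norming polynomial\<close>

locale cl_configuration = absolute_norm_space N
  for N :: "'a::{real_normed_field,euclidean_space} ^ 'n::finite \<Rightarrow> real" +
  fixes m :: nat and y :: "nat \<Rightarrow> 'a ^ 'n"
  assumes CL: "CL_space N" and m_pos: "0 < m"
    and y_extreme: "\<And>j. j < m \<Longrightarrow> y j extreme_point_of unit_ball N"
    and y_nonneg: "\<And>j i. j < m \<Longrightarrow> \<exists>r::real. 0 \<le> r \<and> y j $ i = of_real r"
begin

definition Y :: "nat \<Rightarrow> 'n \<Rightarrow> real" where
  "Y j k = norm (y j $ k)"

lemma Y_nonneg: "0 \<le> Y j k"
  by (simp add: Y_def)

lemma y_real_vec: "j < m \<Longrightarrow> y j = real_vec (Y j)"
proof -
  assume j: "j < m"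
  have "y j $ i = of_real (Y j i)" for i
    using y_nonneg[OF j, of i] by (auto simp: Y_def)
  then show ?thesis by (simp add: vec_eq_iff)
qed

lemma Y_extreme: "j < m \<Longrightarrow> real_vec (Y j) extreme_point_of unit_ball N"
  using y_extreme y_real_vec by metis

definition F :: "'n \<Rightarrow> 'n \<Rightarrow> real" where
  "F i = (SOME G. real_vec G extreme_point_of dual_unit_ball N \<and> (\<forall>k. G k \<ge> 0) \<and> G i = 1)"

lemma F_extreme: "real_vec (F i) extreme_point_of dual_unit_ball N"
  and F_nonneg: "0 \<le> F i k" and F_diag: "F i i = 1"
  using someI_ex[OF nonneg_extreme_functional_at[of i]] unfolding F_def by auto

lemma F_in_dual: "real_vec (F i) \<in> dual_unit_ball N"
  using F_extreme extreme_point_of_def by blast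

definition pivot :: "'n \<Rightarrow> nat \<Rightarrow> 'n" where
  "pivot i j = (SOME p. \<forall>k. F i k * Y j k = (if k = p then 1 else 0))"

lemma pivot_point_mass: "j < m \<Longrightarrow> F i k * Y j k = (if k = pivot i j then 1 else 0)"
  using someI_ex[OF CL_pairing_point_mass[OF CL F_extreme Y_extreme F_nonneg Y_nonneg]]
  unfolding pivot_def by blast

definition a :: "'n \<Rightarrow> real" where
  "a k = (\<Sum>j<m. Y j k) / real m"

definition x0 :: "'a ^ 'n" where
  "x0 = real_vec a"

lemma a_nonneg: "0 \<le> a k"
  unfolding a_def by (intro divide_nonneg_nonneg sum_nonneg) (auto simp: Y_nonneg)

lemma x0_eq: "(of_real (1 / real m) :: 'a) *s (\<Sum>j<m. y j) = x0"
proof -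
  have "(\<Sum>j<m. y j) = (\<Sum>j<m. real_vec (Y j))" using y_real_vec by simp
  then show ?thesis by (simp add: vec_eq_iff x0_def a_def)
qed

lemma x0_in_unit_ball: "x0 \<in> unit_ball N"
proof -
  have "N x0 = (1 / real m) * N (\<Sum>j<m. y j)" using x0_eq[symmetric] by (simp add: N_smult norm_divide)
  also have "\<dots> \<le> (1 / real m) * (\<Sum>j<m. N (y j))" by (intro mult_left_mono N_sum) auto
  also have "\<dots> \<le> (1 / real m) * (\<Sum>j<(m::nat). 1)"
    using y_extreme by (intro mult_left_mono sum_mono) (auto simp: unit_ball_def extreme_point_of_def)
  also have "\<dots> = 1" using m_pos by simp
  finally show ?thesis by (simp add: unit_ball_def)
qed

lemma a_pivot_pos: "j < m \<Longrightarrow> 0 < a (pivot i j)"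
proof -
  assume j: "j < m"
  have "Y j (pivot i j) \<noteq> 0" using pivot_point_mass[OF j, of i "pivot i j"] by auto
  then have "0 < Y j (pivot i j) / real m" using Y_nonneg m_pos by (simp add: order_le_neq_trans)
  also have "\<dots> \<le> a (pivot i j)"
    unfolding a_def using j by (intro divide_right_mono member_le_sum) (auto simp: Y_nonneg)
  finally show ?thesis .
qed

lemma pivot_self: "0 < a k \<Longrightarrow> \<exists>j<m. pivot k j = k"
proof -
  assume a_k: "0 < a k"
  have "\<exists>j<m. Y j k \<noteq> 0"
  proof (rule ccontr)
    assume "\<not> ?thesis"
    then have "a k = 0" by (simp add: a_def)
    then show False using a_k by simp
  qed
  then obtain j where j: "j < m" "Y j k \<noteq> 0" by blast
  then show ?thesis using pivot_point_mass[OF j(1), of k k] F_diag by (auto split: if_splits)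
qed

definition M :: "'n \<Rightarrow> 'a ^ 'n \<Rightarrow> 'a" where
  "M i x = (\<Prod>j<m. x $ pivot i j)"

definition A :: "'n \<Rightarrow> real" where
  "A i = (\<Prod>j<m. a (pivot i j))"

lemma A_pos: "0 < A i"
  unfolding A_def by (intro prod_pos) (simp add: a_pivot_pos)

lemma M_x0: "M i x0 = of_real (A i)"
  by (simp add: M_def x0_def A_def of_real_prod)

lemma pivot_ratio_sum:
  assumes x: "x \<in> unit_ball N"
  shows "(\<Sum>j<m. norm (x $ pivot i j) / a (pivot i j)) \<le> real m"
proof -
  define r where "r k = norm (x $ k) / a k" for k
  have "r (pivot i j) = (\<Sum>k\<in>UNIV. F i k * Y j k * r k)" if j: "j < m" for j
  proof -
    have "(\<Sum>k\<in>UNIV. F i k * Y j k * r k) = (\<Sum>k\<in>UNIV. if k = pivot i j then r k else 0)"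
      by (intro sum.cong refl) (simp add: pivot_point_mass[OF j])
    then show ?thesis by simp
  qed
  then have "(\<Sum>j<m. r (pivot i j)) = (\<Sum>j<m. \<Sum>k\<in>UNIV. F i k * Y j k * r k)"
    by simp
  also have "\<dots> = (\<Sum>k\<in>UNIV. F i k * r k * (\<Sum>j<m. Y j k))"
    by (subst sum.swap) (simp only: sum_distrib_left mult.commute mult.left_commute)
  also have "\<dots> \<le> (\<Sum>k\<in>UNIV. real m * (F i k * norm (x $ k)))"
  proof (rule sum_mono)
    fix k
    have "(\<Sum>j<m. Y j k) = real m * a k" using m_pos by (simp add: a_def)
    then show "F i k * r k * (\<Sum>j<m. Y j k) \<le> real m * (F i k * norm (x $ k))"
      by (cases "a k = 0") (simp_all add: r_def F_nonneg)
  qed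
  also have "\<dots> = real m * (\<Sum>k\<in>UNIV. F i k * norm (x $ k))"
    by (simp add: sum_distrib_left)
  also have "\<dots> \<le> real m * 1"
    using nonneg_dual_moduli_le_one[OF F_in_dual F_nonneg x] by (intro mult_left_mono) auto
  finally show ?thesis by (simp add: r_def)
qed

lemma norm_M_factor: "norm (M i x) = A i * (\<Prod>j<m. norm (x $ pivot i j) / a (pivot i j))"
proof -
  have "norm (M i x) = (\<Prod>j<m. a (pivot i j) * (norm (x $ pivot i j) / a (pivot i j)))"
    unfolding M_def prod_norm[symmetric]
    by (intro prod.cong refl) (simp add: a_pivot_pos less_imp_neq[symmetric])
  also have "\<dots> = A i * (\<Prod>j<m. norm (x $ pivot i j) / a (pivot i j))"
    by (simp only: A_def prod.distrib)
  finally show ?thesis .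
qed

text \<open>By AM-GM each |M_i| is bounded by A_i on the unit ball, with equality only if
  x has the moduli of x0 along the pivots of F_i.\<close>
lemma M_le:
  assumes x: "x \<in> unit_ball N"
  shows "norm (M i x) \<le> A i"
    and "norm (M i x) = A i \<Longrightarrow> j < m \<Longrightarrow> norm (x $ pivot i j) = a (pivot i j)"
proof -
  let ?t = "\<lambda>j. norm (x $ pivot i j) / a (pivot i j)"
  have "\<And>j. j \<in> {..<m} \<Longrightarrow> 0 \<le> ?t j" and "sum ?t {..<m} \<le> real (card {..<m})"
    using pivot_ratio_sum[OF x, of i] by (simp_all add: a_nonneg)
  note amgm = prod_le_one_of_mean_le_one[OF finite_lessThan this]
  show "norm (M i x) \<le> A i"
    using amgm(1) A_pos[of i] by (simp add: norm_M_factor mult_left_le)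
  show "norm (x $ pivot i j) = a (pivot i j)" if "norm (M i x) = A i" "j < m"
    using that amgm(2)[of j] A_pos[of i] a_pivot_pos[of j i] by (simp add: norm_M_factor)
qed

definition G :: "'n \<Rightarrow> real" where
  "G k = (\<Sum>i\<in>UNIV. F i k) / real CARD('n)"

definition g :: "'a ^ 'n" where
  "g = real_vec G"

lemma G_pos: "0 < G k"
proof -
  have "F k k \<le> (\<Sum>i\<in>UNIV. F i k)" by (rule member_le_sum) (auto simp: F_nonneg)
  then show ?thesis using F_diag by (simp add: G_def)
qed

lemma g_in_dual: "g \<in> dual_unit_ball N"
proof -
  have "g = (\<Sum>i\<in>UNIV. (1 / real CARD('n)) *\<^sub>R real_vec (F i))"
    by (simp add: vec_eq_iff g_def G_def sum_divide_distrib scaleR_conv_of_real[where 'a='a] sum_distrib_left)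
  also have "\<dots> \<in> dual_unit_ball N"
    by (rule convex_sum[OF _ convex_dual_unit_ball]) (auto simp: F_in_dual)
  finally show ?thesis .
qed

lemma G_a_sum: "(\<Sum>k\<in>UNIV. G k * a k) = 1"
proof -
  define c where "c = real CARD('n) * real m"
  have "(\<Sum>k\<in>UNIV. G k * a k) = (\<Sum>k\<in>UNIV. (\<Sum>i\<in>UNIV. \<Sum>j<m. F i k * Y j k) / c)"
    by (intro sum.cong refl) (simp add: G_def a_def c_def sum_product)
  also have "\<dots> = (\<Sum>k\<in>UNIV. \<Sum>i\<in>UNIV. \<Sum>j<m. F i k * Y j k) / c"
    by (simp add: sum_divide_distrib)
  also have "(\<Sum>k\<in>UNIV. \<Sum>i\<in>UNIV. \<Sum>j<m. F i k * Y j k) = (\<Sum>i\<in>UNIV. \<Sum>j<m. \<Sum>k\<in>UNIV. F i k * Y j k)"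
    by (subst sum.swap) (intro sum.cong refl sum.swap)
  also have "\<dots> = (\<Sum>i\<in>(UNIV::'n set). \<Sum>j<m. 1)"
    by (intro sum.cong refl) (simp add: CL_pairing_eq_one[OF CL F_extreme Y_extreme F_nonneg Y_nonneg])
  also have "\<dots> = c" by (simp add: c_def)
  finally show ?thesis using m_pos by (simp add: c_def)
qed

lemma g_x0: "pair g x0 = 1"
  unfolding g_def x0_def pair_real_vec G_a_sum by simp

definition Q :: "'a ^ 'n \<Rightarrow> 'a" where
  "Q x = (\<Sum>i\<in>UNIV. of_real (1 / A i) * M i x) + (pair g x) ^ m"

lemma Q_homog: "homog_poly m Q"
proof -
  have "M i = (\<lambda>x. \<Prod>j<m. pair (axis (pivot i j) 1) x)" for i
    by (simp add: fun_eq_iff M_def pair_axis_left)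
  then have "homog_poly m (M i)" for i
    by (simp only: homog_poly_prod_linear)
  then have "homog_poly m (\<lambda>x. \<Sum>i\<in>UNIV. of_real (1 / A i) * M i x)"
    by (intro homog_poly_sum homog_poly_cmult)
  moreover have "homog_poly m (\<lambda>x. (pair g x) ^ m)"
    using homog_poly_prod_linear[of m "\<lambda>_. g"] by simp
  ultimately show ?thesis unfolding Q_def[abs_def] by (rule homog_poly_add)
qed

lemma norm_Q_x0: "norm (Q x0) = real CARD('n) + 1"
proof -
  have "of_real (1 / A i) * M i x0 = (1::'a)" for i
    using A_pos[of i] by (simp add: M_x0 of_real_mult[symmetric] del: of_real_mult)
  then have "Q x0 = of_nat (CARD('n) + 1)" by (simp add: Q_def g_x0)
  then show ?thesis by (simp only: norm_of_nat)
qed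

lemma norm_Q_le_parts:
  "norm (Q x) \<le> (\<Sum>i\<in>UNIV. norm (M i x) / A i) + norm (pair g x) ^ m"
proof -
  have "norm (Q x) \<le> (\<Sum>i\<in>UNIV. norm (of_real (1 / A i) * M i x)) + norm ((pair g x) ^ m)"
    unfolding Q_def by (intro norm_triangle_le add_right_mono norm_sum)
  then show ?thesis by (simp add: norm_mult norm_power norm_divide A_pos abs_of_pos)
qed

lemma norm_Q_le: "x \<in> unit_ball N \<Longrightarrow> norm (Q x) \<le> real CARD('n) + 1"
proof -
  assume x: "x \<in> unit_ball N"
  have "(\<Sum>i\<in>UNIV. norm (M i x) / A i) \<le> (\<Sum>i\<in>(UNIV::'n set). 1)"
    using M_le(1)[OF x] A_pos by (intro sum_mono) (simp add: pos_divide_le_eq)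
  moreover have "norm (pair g x) ^ m \<le> 1"
    using dual_pair_le_one[OF g_in_dual x] by (simp add: power_le_one)
  ultimately show ?thesis using norm_Q_le_parts[of x] by simp
qed

lemma poly_norm_Q: "poly_norm N Q = real CARD('n) + 1"
  unfolding poly_norm_def
  using x0_in_unit_ball norm_Q_x0 norm_Q_le by (intro cSup_eq_maximum) (metis image_eqI, auto)

lemma norming_point_equalities:
  assumes z: "z \<in> unit_ball N" and norming: "norm (Q z) = real CARD('n) + 1"
  shows "norm (M i z) = A i" and "norm (pair g z) = 1"
proof -
  define b where "b i = norm (M i z) / A i" for i
  define c where "c = norm (pair g z) ^ m"
  have b: "b i \<le> 1" for i using M_le(1)[OF z, of i] A_pos[of i] by (simp add: b_def pos_divide_le_eq)
  have c: "c \<le> 1" using dual_pair_le_one[OF g_in_dual z] by (simp add: c_def power_le_one)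
  have sum_ge: "(\<Sum>i\<in>(UNIV::'n set). 1) + 1 \<le> sum b UNIV + c"
    using norm_Q_le_parts[of z] norming by (simp add: b_def c_def)
  moreover have "sum b UNIV \<le> (\<Sum>i\<in>(UNIV::'n set). 1)" using b by (intro sum_mono)
  ultimately have sum_b: "(\<Sum>i\<in>(UNIV::'n set). 1) \<le> sum b UNIV" and c_one: "c = 1"
    using c by linarith+
  have "b i = 1" by (rule sum_le_sum_termwise_eq[OF finite b sum_b UNIV_I])
  then show "norm (M i z) = A i" using A_pos[of i] by (simp add: b_def)
  have "norm (norm (pair g z)) = 1"
    using c_one m_pos power_eq_1_iff unfolding c_def by blast
  then show "norm (pair g z) = 1" by simp
qed

text \<open>If all monomials are maximal at z then z has the moduli of x0: first on the support of
  x0 (every such coordinate is a pivot), then everywhere, since the positive functional g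
  is 1 at the moduli of x0.\<close>
lemma norming_point_moduli:
  assumes z: "z \<in> unit_ball N" and M_max: "\<And>i. norm (M i z) = A i"
  shows "norm (z $ k) = a k"
proof -
  have on_support: "norm (z $ k) = a k" if pos: "0 < a k" for k
  proof -
    obtain j where "j < m" "pivot k j = k" using pivot_self[OF pos] by blast
    then show ?thesis using M_le(2)[OF z M_max] by metis
  qed
  have le: "G k * a k \<le> G k * norm (z $ k)" for k
    using on_support[of k] a_nonneg[of k] G_pos[of k] by (cases "a k = 0") auto
  have "(\<Sum>k\<in>UNIV. G k * norm (z $ k)) \<le> (\<Sum>k\<in>UNIV. G k * a k)"
    using nonneg_dual_moduli_le_one[of G z] g_in_dual G_pos z G_a_sum
    by (simp add: g_def less_imp_le)
  then have "G k * a k = G k * norm (z $ k)"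
    by (rule sum_le_sum_termwise_eq[OF finite le _ UNIV_I])
  then show ?thesis using G_pos[of k] by simp
qed

text \<open>If moreover |g(z)| = 1, the equality case of Cauchy-Schwarz aligns all phases with g(z).\<close>
lemma norming_point_phase:
  assumes moduli: "\<And>k. norm (z $ k) = a k" and g_one: "norm (pair g z) = 1"
  shows "z = pair g z *s x0"
proof -
  define l where "l = pair g z"
  have "inner l l = 1" using g_one by (simp add: l_def power2_norm_eq_inner[symmetric])
  also have "inner l l = (\<Sum>k\<in>UNIV. G k * inner l (z $ k))"
    by (simp add: l_def pair_def g_def scaleR_conv_of_real[symmetric] inner_sum_right)
  finally have sum_ge: "(\<Sum>k\<in>UNIV. G k * a k) \<le> (\<Sum>k\<in>UNIV. G k * inner l (z $ k))"
    using G_a_sum by simp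
  have "inner l (z $ k) \<le> a k" for k
    using norm_cauchy_schwarz[of l "z $ k"] g_one moduli[of k] by (simp add: l_def)
  then have le: "G k * inner l (z $ k) \<le> G k * a k" for k
    using G_pos[of k] by (simp add: mult_left_mono)
  have eq: "G k * inner l (z $ k) = G k * a k" for k
    by (rule sum_le_sum_termwise_eq[OF finite le sum_ge UNIV_I])
  have "inner l (z $ k) = norm l * norm (z $ k)" for k
    using eq[of k] G_pos[of k] g_one moduli[of k] by (simp add: l_def)
  then have aligned: "norm l *\<^sub>R z $ k = norm (z $ k) *\<^sub>R l" for k
    using norm_cauchy_schwarz_eq by blast
  have "z $ k = (l *s x0) $ k" for k
    using aligned[of k] g_one moduli[of k] by (simp add: l_def x0_def scaleR_conv_of_real mult.commute)
  then show ?thesis by (simp add: vec_eq_iff l_def)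
qed

text \<open>Q strongly attains its norm at x0: a maximizing sequence has a convergent subsequence
  in the compact unit ball, whose limit is a norming point, hence a unimodular multiple of x0.\<close>
lemma Q_strongly_attains: "strongly_attains_at N Q x0"
  unfolding strongly_attains_at_def
proof (intro conjI allI impI)
  show "x0 \<in> unit_ball N" by (rule x0_in_unit_ball)
  show "Q \<noteq> (\<lambda>_. 0)"
  proof
    assume "Q = (\<lambda>_. 0)"
    then show False using norm_Q_x0 by simp
  qed
  fix s :: "nat \<Rightarrow> 'a ^ 'n"
  assume s: "(\<forall>k. s k \<in> unit_ball N) \<and> (\<lambda>k. norm (Q (s k))) \<longlonglongrightarrow> poly_norm N Q"
  obtain z r where z: "z \<in> unit_ball N" and r: "strict_mono r" and lim: "(s \<circ> r) \<longlonglongrightarrow> z"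
    using seq_compactE[OF compact_imp_seq_compact[OF compact_unit_ball]] s by metis
  have "continuous_on UNIV Q"
    unfolding Q_def[abs_def] M_def pair_def by (intro continuous_intros)
  then have "isCont Q z" by (simp add: continuous_on_eq_continuous_at)
  then have "(\<lambda>k. norm (Q ((s \<circ> r) k))) \<longlonglongrightarrow> norm (Q z)"
    by (intro tendsto_norm isCont_tendsto_compose[OF _ lim])
  moreover have "(\<lambda>k. norm (Q ((s \<circ> r) k))) \<longlonglongrightarrow> poly_norm N Q"
    using LIMSEQ_subseq_LIMSEQ[OF conjunct2[OF s] r] by (simp add: o_def)
  ultimately have "norm (Q z) = real CARD('n) + 1"
    unfolding poly_norm_Q[symmetric] by (rule LIMSEQ_unique)
  note equalities = norming_point_equalities[OF z this]
  have "z = pair g z *s x0"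
    by (rule norming_point_phase[OF norming_point_moduli[OF z equalities(1)] equalities(2)])
  then obtain l where "norm l = 1" "z = l *s x0" using equalities(2) by blast
  then show "\<exists>l. norm l = 1 \<and> (\<exists>r. strict_mono r \<and> (s \<circ> r) \<longlonglongrightarrow> l *s x0)"
    using r lim by blast
qed

lemma x0_in_rho_tilde: "x0 \<in> rho_tilde N m"
  unfolding rho_tilde_def using Q_homog Q_strongly_attains strongly_attains_at_def by blast

end

lemma thm45_claim_euclidean: "thm45_claim TYPE('a::{real_normed_field,euclidean_space}) TYPE('n::finite)"
  unfolding thm45_claim_def
proof (intro allI impI)
  fix N :: "'a ^ 'n \<Rightarrow> real" and m :: nat and y :: "nat \<Rightarrow> 'a ^ 'n"
  assume "absolute_norm N" "CL_space N" "0 < m"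
    "\<forall>j<m. y j extreme_point_of unit_ball N \<and> (\<forall>i. \<exists>r::real. 0 \<le> r \<and> y j $ i = of_real r)"
  then interpret cl_configuration N m y
    by unfold_locales auto
  show "(of_real (1 / real m) :: 'a) *s (\<Sum>j<m. y j) \<in> rho_tilde N m"
    using x0_eq x0_in_rho_tilde by simp
qed

theorem theorem4p5:
  shows "thm45_claim TYPE(real) TYPE('n::finite) \<and> thm45_claim TYPE(complex) TYPE('n::finite)"
  using thm45_claim_euclidean[where 'a=real] thm45_claim_euclidean[where 'a=complex] by blast

end
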